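(* Let $u,v\in\{m_1,\dots,m_{k+1}\}^*$. Then there exists a state $s\in\mathcal S_k$ with $u\ast s=v\ast s\neq\varnothing$ if and only if $u\sim v$.
   Context: Fix $k\ge 0$. A system of $k$ stacks in series consists of an input queue, stacks $1,\dots,k$, and an output queue. A state records the contents of each stack and each queue (finitely many distinct labelled elements); there is one additional "illegal" state $\varnothing$; $\mathcal S_k$ denotes the set of all states including $\varnothing$. The moves are $m_1,\dots,m_{k+1}$: $m_i$ ($1\le i\le k$) pushes an element onto stack $i$, taking it from the front of the input queue if $i=1$ and popping it from the top of stack $i-1$ if $i>1$; $m_{k+1}$ pops the top of stack $k$ and enqueues it at the back of the output queue. For a word $w$ and state $s$, $w\ast s$ is obtained by applying the moves of $w$ left to right, with $w\ast s=\varnothing$ if some move is illegal and $w\ast\varnothing=\varnothing$. For words $x,y$ define $x\sim y$ iff $x\ast s=y\ast s$ for all $s\in\mathcal S_k$. *)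

theory Defs
  imports Main
begin

text \<open>A (legal) state of k stacks in series: (input queue, stacks 1..k, output queue). The front of the input queue is
  its head, the top of a stack is its head, the back of the output queue is its last
  element. The illegal state is None.\<close>

type_synonym state = "(nat list \<times> nat list list \<times> nat list) option"

definition states :: "nat \<Rightarrow> state set" where
  "states k = {None} \<union>
     {Some (inp, sts, out) | inp sts out. length sts = k \<and> distinct (inp @ concat sts @ out)}"

text \<open>Move m_i (1 \<le> i \<le> k+1): container 0 is the input queue, containers 1..k are the
  stacks, container k+1 is the output queue; m_i moves one element from container i-1
  to container i.\<close>
definition move :: "nat \<Rightarrow> nat \<Rightarrow> state \<Rightarrow> state" where
  "move k i s = (case s of None \<Rightarrow> None
     | Some (inp, sts, out) \<Rightarrow>
        (if i < 1 \<or> k + 1 < i then None else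
         (let src = (if i = 1 then inp else sts ! (i - 2)) in
          (if src = [] then None else
           (let x = hd src;
                inp2 = (if i = 1 then tl src else inp);
                sts2 = (if i = 1 then sts else sts[i - 2 := tl src])
            in (if i \<le> k then Some (inp2, sts2[i - 1 := x # (sts2 ! (i - 1))], out)
                else Some (inp2, sts2, out @ [x])))))))"

definition act :: "nat \<Rightarrow> nat list \<Rightarrow> state \<Rightarrow> state" where
  "act k w s = fold (move k) w s"

definition words :: "nat \<Rightarrow> nat list set" where
  "words k = {w. set w \<subseteq> {1..k+1}}"

definition equiv_words :: "nat \<Rightarrow> nat list \<Rightarrow> nat list \<Rightarrow> bool" where
  "equiv_words k x y \<longleftrightarrow> (\<forall>s \<in> states k. act k x s = act k y s)"

end

theory Submission
  imports Defs "HOL-Library.Multiset"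
begin

text \<open>
  The direction from \<open>u \<sim> v\<close> to a common legal result is easy: a state with at
  least \<open>|u|\<close> elements in the input queue and in every stack makes every move of \<open>u\<close> legal.

  For the converse, let \<open>u * s = v * s \<noteq> \<emptyset>\<close> and let \<open>t\<close> be any legal state.  We pad
  \<open>s\<close> and \<open>t\<close> with fresh elements placed behind the existing ones (at the back of the input
  queue, at the bottom of the stacks, at the front of the output queue) until corresponding
  containers have equal length.  Padding commutes with every legal run, and the action of a
  word commutes with relabelling of elements, so \<open>u\<close> and \<open>v\<close> agree on the padded \<open>t\<close>,
  which is a relabelling of the padded \<open>s\<close>.  It remains to remove the padding: if both runs
  on \<open>t\<close> are legal this follows from injectivity of padding; a run that is legal on the
  padded state but illegal on \<open>t\<close> must move a padding element forward, which strictly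
  increases the weight (sum of container indices) of the padding elements, whereas a run that
  is legal on \<open>t\<close> leaves the padding in place.  So mixed outcomes are impossible.
\<close>

text \<open>Its containers are
  numbered \<open>0\<close> (input queue), \<open>1..k\<close> (stacks) and \<open>k + 1\<close> (output queue), so that move
  \<open>m\<^sub>i\<close> transfers an element from container \<open>i - 1\<close> to container \<open>i\<close>.\<close>

type_synonym config = "nat list \<times> nat list list \<times> nat list"

fun containers :: "config \<Rightarrow> nat list list" where
  "containers (inp, ss, out) = inp # ss @ [out]"

lemma length_containers: "length (containers c) = length (fst (snd c)) + 2"
  by (cases c) simp

lemma Some_in_states:
  "Some c \<in> states k \<longleftrightarrow> length (fst (snd c)) = k \<and> distinct (concat (containers c))"
  by (cases c) (simp add: states_def)

lemma move_None [simp]: "move k i None = None"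
  by (simp add: move_def)

lemma act_None [simp]: "act k w None = None"
  by (induct w) (auto simp: act_def)

lemma act_Nil [simp]: "act k [] s = s"
  by (simp add: act_def)

lemma act_Cons [simp]: "act k (i # w) s = act k w (move k i s)"
  by (simp add: act_def)

lemma positive_index_cases: "1 \<le> (i::nat) \<Longrightarrow> i = 1 \<or> (\<exists>j. i = Suc (Suc j))"
  by presburger

lemma move_fails_iff:
  assumes "length ss = k" "1 \<le> i" "i \<le> k + 1"
  shows "move k i (Some (inp, ss, out)) = None \<longleftrightarrow> containers (inp, ss, out) ! (i - 1) = []"
  using positive_index_cases[OF assms(2)] assms
  by (auto simp: move_def Let_def nth_append split: if_splits)

lemma move_containers:
  assumes "length ss = k" "move k i (Some (inp, ss, out)) = Some (inp', ss', out')"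
  defines "cs \<equiv> containers (inp, ss, out)"
  shows "1 \<le> i \<and> i \<le> k + 1 \<and> cs ! (i - 1) \<noteq> [] \<and> length ss' = k \<and>
    containers (inp', ss', out') = cs[i - 1 := tl (cs ! (i - 1)),
       i := (if i \<le> k then hd (cs ! (i - 1)) # cs ! i else cs ! i @ [hd (cs ! (i - 1))])]"
proof -
  have range: "1 \<le> i \<and> i \<le> k + 1" using assms by (auto simp: move_def split: if_splits)
  then consider "i = 1" | j where "i = Suc (Suc j)" using positive_index_cases by blast
  then show ?thesis
  proof cases
    case 1
    then show ?thesis using assms
      by (cases k; cases ss) (auto simp: move_def Let_def split: if_splits)
  next
    case 2
    then show ?thesis using assms range
      by (auto simp: move_def Let_def nth_append split: if_splits
          intro!: nth_equalityI simp: nth_list_update nth_Cons split: nat.splits)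
  qed
qed

lemma move_stack_count:
  assumes "length (fst (snd c)) = k" "move k i (Some c) = Some c'"
  shows "length (fst (snd c')) = k"
proof -
  obtain inp ss out where "c = (inp, ss, out)" by (cases c)
  moreover obtain inp' ss' out' where "c' = (inp', ss', out')" by (cases c')
  ultimately show ?thesis using move_containers[of ss k i inp out inp' ss' out'] assms by simp
qed

lemma move_container_length:
  assumes "length (fst (snd c)) = k" "move k i (Some c) = Some c'" "j < k + 2"
  shows "length (containers c ! j) \<le> Suc (length (containers c' ! j))"
proof -
  obtain inp ss out where c: "c = (inp, ss, out)" by (cases c)
  obtain inp' ss' out' where c': "c' = (inp', ss', out')" by (cases c')
  note M = move_containers[of ss k i inp out inp' ss' out']
  let ?cs = "containers c"
  let ?T = "if i \<le> k then hd (?cs ! (i - 1)) # ?cs ! i else ?cs ! i @ [hd (?cs ! (i - 1))]"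
  have eq: "containers c' = ?cs[i - 1 := tl (?cs ! (i - 1)), i := ?T]"
    using M assms unfolding c c' by (simp only: fst_conv snd_conv)
  have bounds: "i < length ?cs" "j < length ?cs"
    using M assms unfolding c c' by auto
  show ?thesis unfolding eq using bounds
    by (cases "j = i"; cases "j = i - 1") (auto simp del: containers.simps)
qed

lemma act_invariant:
  assumes refl: "\<And>c. R c c" and trans: "\<And>a b c. R a b \<Longrightarrow> R b c \<Longrightarrow> R a c"
    and step: "\<And>c c' i. length (fst (snd c)) = k \<Longrightarrow> move k i (Some c) = Some c' \<Longrightarrow> R c c'"
  shows "length (fst (snd c)) = k \<Longrightarrow> act k w (Some c) = Some r \<Longrightarrow> R c r"
proof (induction w arbitrary: c)
  case (Cons i w)
  then obtain c' where c': "move k i (Some c) = Some c'"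
    by (cases "move k i (Some c)") auto
  have "R c' r"
    using Cons.IH[of c'] Cons.prems move_stack_count[OF Cons.prems(1) c'] c' by simp
  then show ?case using trans step[OF Cons.prems(1) c'] by blast
qed (simp add: refl)

lemma act_stack_count:
  assumes "length (fst (snd c)) = k" "act k w (Some c) = Some r"
  shows "length (fst (snd r)) = k"
proof -
  have step: "length (fst (snd c')) = length (fst (snd c))"
    if "length (fst (snd c)) = k" "move k i (Some c) = Some c'" for c c' i
    using move_stack_count[OF that] that(1) by simp
  have "length (fst (snd r)) = length (fst (snd c))"
    using act_invariant[where R = "\<lambda>c c'. length (fst (snd c')) = length (fst (snd c))",
        OF _ _ step assms] by simp
  then show ?thesis using assms(1) by simp
qed

abbreviation labels :: "config \<Rightarrow> nat set" where
  "labels c \<equiv> set (concat (containers c))"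

lemma set_concat_update: "set (concat (xs[i := y])) \<subseteq> set (concat xs) \<union> set y"
  by (induction xs arbitrary: i) (auto split: nat.splits)

lemma move_labels:
  assumes "length (fst (snd c)) = k" "move k i (Some c) = Some c'"
  shows "labels c' \<subseteq> labels c"
proof -
  obtain inp ss out where c: "c = (inp, ss, out)" by (cases c)
  obtain inp' ss' out' where c': "c' = (inp', ss', out')" by (cases c')
  note M = move_containers[of ss k i inp out inp' ss' out']
  let ?cs = "containers c"
  let ?src = "?cs ! (i - 1)"
  let ?T = "if i \<le> k then hd ?src # ?cs ! i else ?cs ! i @ [hd ?src]"
  have eq: "containers c' = ?cs[i - 1 := tl ?src, i := ?T]"
    using M assms unfolding c c' by (simp only: fst_conv snd_conv)
  have "i < length ?cs" "i - 1 < length ?cs" "?src \<noteq> []"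
    using M assms unfolding c c' by auto
  then have "set ?src \<subseteq> set (concat ?cs)" "set (?cs ! i) \<subseteq> set (concat ?cs)"
    "hd ?src \<in> set ?src" "set (tl ?src) \<subseteq> set ?src"
    by (auto simp del: containers.simps intro!: bexI[OF _ nth_mem] dest: list.set_sel(2))
  then have "set (tl ?src) \<union> set ?T \<subseteq> set (concat ?cs)"
    by (auto simp del: containers.simps)
  moreover have "set (concat (containers c')) \<subseteq> set (concat ?cs) \<union> set (tl ?src) \<union> set ?T"
    unfolding eq using set_concat_update[of ?cs "i - 1" "tl ?src"]
      set_concat_update[of "?cs[i - 1 := tl ?src]" i ?T] by blast
  ultimately show ?thesis by blast
qed

lemma act_labels:
  assumes "length (fst (snd c)) = k" "act k w (Some c) = Some r"
  shows "labels r \<subseteq> labels c"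
  by (rule act_invariant[where R = "\<lambda>c c'. labels c' \<subseteq> labels c", OF _ _ move_labels])
    (use assms in auto)

section \<open>Relabelling\<close>

fun relabel :: "(nat \<Rightarrow> nat) \<Rightarrow> config \<Rightarrow> config" where
  "relabel f (inp, ss, out) = (map f inp, map (map f) ss, map f out)"

lemma containers_relabel: "containers (relabel g c) = map (map g) (containers c)"
  by (cases c) simp

lemma containers_inj: "containers a = containers b \<Longrightarrow> a = b"
  by (cases a; cases b) auto

lemma move_relabel:
  assumes "length (fst (snd c)) = k"
  shows "move k i (Some (relabel f c)) = map_option (relabel f) (move k i (Some c))"
proof -
  obtain inp ss out where c: "c = (inp, ss, out)" by (cases c)
  show ?thesis
  proof (cases "1 \<le> i \<and> i \<le> k + 1")
    case False then show ?thesis by (auto simp: move_def)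
  next
    case True
    then consider "i = 1" | j where "i = Suc (Suc j)" using positive_index_cases by blast
    then show ?thesis
    proof cases
      case 1 then show ?thesis using assms True unfolding c
        by (cases inp) (auto simp: move_def Let_def map_update hd_map)
    next
      case 2 then show ?thesis using assms True unfolding c
        by (auto simp: move_def Let_def map_update hd_map map_tl)
    qed
  qed
qed

lemma act_relabel:
  "length (fst (snd c)) = k \<Longrightarrow> act k w (Some (relabel f c)) = map_option (relabel f) (act k w (Some c))"
proof (induction w arbitrary: c)
  case (Cons i w)
  show ?case
  proof (cases "move k i (Some c)")
    case None
    then show ?thesis using move_relabel[OF Cons.prems] by simp
  next
    case (Some c')
    then show ?thesis
      using Cons.IH[OF move_stack_count[OF Cons.prems Some]] move_relabel[OF Cons.prems] by simp
  qed
qed simp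

section \<open>Padding\<close>

text \<open>Padding a configuration \<open>c\<close> by a configuration \<open>E\<close> of fresh elements puts the contents of
  each container of \<open>E\<close> behind those of \<open>c\<close>, i.e. where no legal run on \<open>c\<close> ever looks.\<close>

fun pad :: "config \<Rightarrow> config \<Rightarrow> config" where
  "pad (ei, es, eo) (inp, ss, out) = (inp @ ei, map (\<lambda>(a, b). a @ b) (zip ss es), eo @ out)"

lemma update_zip_append:
  "j < length ss \<Longrightarrow> length es = length ss \<Longrightarrow>
   map (\<lambda>(a, b). a @ b) (zip (ss[j := x]) es) = (map (\<lambda>(a, b). a @ b) (zip ss es))[j := x @ es ! j]"
  by (rule nth_equalityI) (auto simp: nth_list_update)

lemma move_pad:
  assumes "length (fst (snd c)) = k" "length (fst (snd E)) = k" "move k i (Some c) = Some r"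
  shows "move k i (Some (pad E c)) = Some (pad E r)"
proof -
  obtain ei es eo where E: "E = (ei, es, eo)" by (cases E)
  obtain inp ss out where c: "c = (inp, ss, out)" by (cases c)
  have range: "1 \<le> i \<and> i \<le> k + 1" using assms unfolding c by (auto simp: move_def split: if_splits)
  then consider "i = 1" | j where "i = Suc (Suc j)" using positive_index_cases by blast
  then show ?thesis
  proof cases
    case 1 then show ?thesis using assms range unfolding E c
      by (cases inp) (auto simp: move_def Let_def Suc_le_eq update_zip_append split: if_splits)
  next
    case 2 then show ?thesis using assms range unfolding E c
      by (auto simp: move_def Let_def update_zip_append split: if_splits)
  qed
qed

lemma act_pad:
  "length (fst (snd c)) = k \<Longrightarrow> length (fst (snd E)) = k \<Longrightarrow> act k w (Some c) = Some r \<Longrightarrow>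
   act k w (Some (pad E c)) = Some (pad E r)"
proof (induction w arbitrary: c)
  case (Cons i w)
  then obtain c' where c': "move k i (Some c) = Some c'"
    by (cases "move k i (Some c)") auto
  then show ?case
    using Cons.IH[OF move_stack_count[OF Cons.prems(1) c'] Cons.prems(2)] Cons.prems
      move_pad[OF Cons.prems(1,2) c'] by simp
qed simp

lemma pad_inj:
  assumes "pad E a = pad E b" "length (fst (snd a)) = length (fst (snd E))"
    "length (fst (snd b)) = length (fst (snd E))"
  shows "a = b"
proof -
  obtain ei es eo where E: "E = (ei, es, eo)" by (cases E)
  obtain a1 a2 a3 where a: "a = (a1, a2, a3)" by (cases a)
  obtain b1 b2 b3 where b: "b = (b1, b2, b3)" by (cases b)
  have lengths: "length a2 = length es" "length b2 = length es"
    using assms unfolding E a b by simp_all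
  have "a2 = b2"
  proof (rule nth_equalityI)
    show "length a2 = length b2" using lengths by simp
    fix j assume "j < length a2"
    have "map (\<lambda>(x, y). x @ y) (zip a2 es) ! j = map (\<lambda>(x, y). x @ y) (zip b2 es) ! j"
      using assms(1) unfolding E a b by simp
    then show "a2 ! j = b2 ! j" using \<open>j < length a2\<close> lengths by simp
  qed
  then show ?thesis using assms unfolding E a b by simp
qed

lemma containers_pad_nth:
  assumes "length (fst (snd E)) = length (fst (snd c))" "j \<le> length (fst (snd c))"
  shows "containers (pad E c) ! j = containers c ! j @ containers E ! j"
  using assms by (cases E; cases c; cases j) (auto simp: nth_append)

lemma mset_concat_zip_append:
  "length ss = length es \<Longrightarrow>
   mset (concat (map (\<lambda>(a, b). a @ b) (zip ss es))) = mset (concat ss) + mset (concat es)"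
  by (induction ss es rule: list_induct2) auto

lemma pad_distinct:
  assumes "length (fst (snd E)) = length (fst (snd c))"
    "distinct (concat (containers c))" "distinct (concat (containers E))" "labels E \<inter> labels c = {}"
  shows "distinct (concat (containers (pad E c)))"
proof -
  have "mset (concat (containers (pad E c))) = mset (concat (containers c) @ concat (containers E))"
    using assms(1) by (cases E; cases c) (simp add: mset_concat_zip_append)
  moreover have "distinct (concat (containers c) @ concat (containers E))"
    using assms(2-4) by auto
  ultimately show ?thesis using mset_eq_imp_distinct_iff by blast
qed

lemma map_length_zip_append:
  "length ss = length es \<Longrightarrow>
   map length (map (\<lambda>(a, b). a @ b) (zip ss es)) = map (\<lambda>(a, b). a + b) (zip (map length ss) (map length es))"
  by (induction ss es rule: list_induct2) auto

lemma pad_shape: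
  assumes "length (fst (snd E)) = length (fst (snd c))"
  shows "map length (containers (pad E c)) =
    map (\<lambda>(a, b). a + b) (zip (map length (containers c)) (map length (containers E)))"
  using assms by (cases E; cases c) (simp add: map_length_zip_append[simplified])

section \<open>Weight of a set of elements\<close>

definition weight :: "(nat \<Rightarrow> bool) \<Rightarrow> nat list list \<Rightarrow> nat" where
  "weight P cs = (\<Sum>j<length cs. j * length (filter P (cs ! j)))"

text \<open>Moving the head \<open>x\<close> of container \<open>a\<close> into container \<open>a + 1\<close>.\<close>
lemma weight_shift:
  assumes "Suc a < length cs" "cs ! a = x # A"
    "length (filter P B) = length (filter P (cs ! Suc a)) + (if P x then 1 else 0)"
  shows "weight P (cs[a := A, Suc a := B]) = weight P cs + (if P x then 1 else 0)"
proof -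
  let ?cs = "cs[a := A, Suc a := B]"
  let ?b = "(if P x then 1 else 0) :: nat"
  define f where "f j = j * length (filter P (?cs ! j))" for j
  define g where "g j = j * length (filter P (cs ! j))" for j
  let ?rest = "{..<length cs} - {a, Suc a}"
  have split: "{..<length cs} = insert a (insert (Suc a) ?rest)" using assms(1) by auto
  have rest: "sum f ?rest = sum g ?rest"
    by (rule sum.cong) (auto simp: f_def g_def)
  have "f a + f (Suc a) = g a + g (Suc a) + ?b"
    using assms by (simp add: f_def g_def nth_list_update algebra_simps)
  then have "sum f {..<length cs} = sum g {..<length cs} + ?b"
    using rest by (subst (1 2) split) simp
  then show ?thesis by (simp add: weight_def f_def g_def)
qed

lemma move_weight:
  assumes "length (fst (snd c)) = k" "move k i (Some c) = Some c'"
  shows "weight P (containers c') =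
    weight P (containers c) + (if P (hd (containers c ! (i - 1))) then 1 else 0)"
proof -
  obtain inp ss out where c: "c = (inp, ss, out)" by (cases c)
  obtain inp' ss' out' where c': "c' = (inp', ss', out')" by (cases c')
  note M = move_containers[of ss k i inp out inp' ss' out']
  let ?cs = "containers c"
  have i: "Suc (i - 1) = i" using M assms c c' by auto
  let ?T = "if i \<le> k then hd (?cs ! (i - 1)) # ?cs ! i else ?cs ! i @ [hd (?cs ! (i - 1))]"
  have eq: "containers c' = ?cs[i - 1 := tl (?cs ! (i - 1)), Suc (i - 1) := ?T]"
    using M assms i unfolding c c' by (simp only: fst_conv snd_conv)
  show ?thesis unfolding eq
    by (rule weight_shift) (use M assms c c' i in auto)
qed

lemma act_weight_mono:
  "length (fst (snd c)) = k \<Longrightarrow> act k w (Some c) = Some r \<Longrightarrow>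
   weight P (containers c) \<le> weight P (containers r)"
  by (rule act_invariant[where R = "\<lambda>c c'. weight P (containers c) \<le> weight P (containers c')"])
    (auto simp: move_weight)

lemma weight_pad:
  assumes "length (fst (snd E)) = length (fst (snd c))"
  shows "weight P (containers (pad E c)) = weight P (containers c) + weight P (containers E)"
proof -
  let ?n = "length (fst (snd c)) + 2"
  let ?cnt = "\<lambda>cs j. length (filter P (cs ! j))"
  have lengths: "length (containers (pad E c)) = ?n" "length (containers c) = ?n"
    "length (containers E) = ?n"
    using assms by (cases E; cases c; simp)+
  have count: "?cnt (containers (pad E c)) j = ?cnt (containers c) j + ?cnt (containers E) j"
    if "j < ?n" for j
  proof (cases "j \<le> length (fst (snd c))")
    case True then show ?thesis using containers_pad_nth[OF assms True] by simp
  next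
    case False
    then have "j = length (fst (snd c)) + 1" using that by simp
    then show ?thesis using assms by (cases E; cases c) (simp add: nth_append)
  qed
  have "weight P (containers (pad E c)) =
      (\<Sum>j<?n. j * ?cnt (containers c) j + j * ?cnt (containers E) j)"
    unfolding weight_def lengths by (rule sum.cong) (simp_all add: count algebra_simps)
  then show ?thesis by (simp add: weight_def lengths sum.distrib)
qed

lemma weight_zero: "(\<forall>x\<in>set (concat cs). \<not> P x) \<Longrightarrow> weight P cs = 0"
  unfolding weight_def by (rule sum.neutral) (auto simp: filter_empty_conv)

section \<open>Removing the padding\<close>

text \<open>Padding cannot turn an illegal run into a legal one with the same result as a legal run:
  the former moves padding elements forward, the latter leaves them where they are.\<close>

lemma move_pad_exposes_padding:
  assumes "length (fst (snd c)) = k" "length (fst (snd E)) = k"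
    "move k i (Some c) = None" "move k i (Some (pad E c)) = Some z"
  shows "hd (containers (pad E c) ! (i - 1)) \<in> labels E"
proof -
  obtain inp ss out where c: "c = (inp, ss, out)" by (cases c)
  obtain ei es eo where E: "E = (ei, es, eo)" by (cases E)
  obtain z1 z2 z3 where z: "z = (z1, z2, z3)" by (cases z)
  have padded: "1 \<le> i \<and> i \<le> k + 1 \<and> containers (pad E c) ! (i - 1) \<noteq> []"
    using move_containers[of "fst (snd (pad E c))" k i "fst (pad E c)" "snd (snd (pad E c))" z1 z2 z3]
      assms z unfolding c E by simp
  then have "containers c ! (i - 1) = []"
    using move_fails_iff[of ss k i inp out] assms unfolding c by simp
  then have "containers (pad E c) ! (i - 1) = containers E ! (i - 1)"
    using containers_pad_nth[of E c "i - 1"] assms padded by (simp add: le_diff_conv)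
  moreover have "i - 1 < length (containers E)" using assms padded unfolding E by auto
  ultimately show ?thesis using padded by (auto intro!: bexI[OF _ nth_mem])
qed

lemma act_pad_weight_increases:
  assumes "length (fst (snd c)) = k" "length (fst (snd E)) = k" "\<forall>x \<in> labels E. P x"
    "act k v (Some c) = None" "act k v (Some (pad E c)) = Some y"
  shows "weight P (containers (pad E c)) < weight P (containers y)"
  using assms
proof (induction v arbitrary: c)
  case (Cons i v)
  have len: "length (fst (snd (pad E c))) = k" using Cons.prems by (cases E; cases c) simp
  from Cons.prems obtain z where z: "move k i (Some (pad E c)) = Some z"
    by (cases "move k i (Some (pad E c))") auto
  have rest: "act k v (Some z) = Some y" using Cons.prems z by simp
  show ?case
  proof (cases "move k i (Some c)")
    case None
    then have "P (hd (containers (pad E c) ! (i - 1)))"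
      using move_pad_exposes_padding[OF Cons.prems(1,2) None z] Cons.prems(3) by blast
    then have "weight P (containers z) = weight P (containers (pad E c)) + 1"
      using move_weight[OF len z] by simp
    moreover have "weight P (containers z) \<le> weight P (containers y)"
      using act_weight_mono[OF move_stack_count[OF len z] rest] .
    ultimately show ?thesis by simp
  next
    case (Some c')
    then have "z = pad E c'" using move_pad[OF Cons.prems(1,2) Some] z by simp
    then have "weight P (containers (pad E c')) < weight P (containers y)"
      using Cons.IH[OF move_stack_count[OF Cons.prems(1) Some] Cons.prems(2,3)] Cons.prems(4) Some rest
      by simp
    moreover have "weight P (containers (pad E c)) \<le> weight P (containers z)"
      using move_weight[OF len z] by simp
    ultimately show ?thesis using \<open>z = pad E c'\<close> by simp
  qed
qed simp

text \<open>The weight of the padding is unchanged by the legal run of \<open>u\<close> but raised by the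
  run of \<open>v\<close>, so the two padded runs cannot end in the same state.\<close>
lemma pad_cannot_rescue:
  assumes "length (fst (snd c)) = k" "length (fst (snd E)) = k" "labels E \<inter> labels c = {}"
    "act k u (Some c) = Some r" "act k v (Some c) = None"
  shows "act k u (Some (pad E c)) \<noteq> act k v (Some (pad E c))"
proof
  let ?P = "\<lambda>x. x \<in> labels E"
  assume agree: "act k u (Some (pad E c)) = act k v (Some (pad E c))"
  have u_pad: "act k u (Some (pad E c)) = Some (pad E r)"
    using act_pad[OF assms(1,2,4)] .
  have "weight ?P (containers (pad E c)) < weight ?P (containers (pad E r))"
    by (rule act_pad_weight_increases[OF assms(1,2) _ assms(5)]) (use agree u_pad in auto)
  moreover have "weight ?P (containers c) = 0"
    using assms(3) by (intro weight_zero) blast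
  moreover have "weight ?P (containers r) = 0"
    using act_labels[OF assms(1,4)] assms(3) by (intro weight_zero) blast
  moreover have "length (fst (snd r)) = k" using act_stack_count[OF assms(1,4)] .
  ultimately show False using weight_pad[of E c ?P] weight_pad[of E r ?P] assms(1,2) by simp
qed

lemma unpad_agreement:
  assumes "length (fst (snd c)) = k" "length (fst (snd E)) = k" "labels E \<inter> labels c = {}"
    "act k u (Some (pad E c)) = act k v (Some (pad E c))"
  shows "act k u (Some c) = act k v (Some c)"
proof (cases "act k u (Some c)")
  case None
  show ?thesis
  proof (cases "act k v (Some c)")
    case (Some b)
    then show ?thesis using pad_cannot_rescue[OF assms(1-3) Some None] assms(4) by simp
  qed (simp add: None)
next
  case (Some a)
  show ?thesis
  proof (cases "act k v (Some c)")
    case None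
    then show ?thesis using pad_cannot_rescue[OF assms(1-3) Some None] assms(4) by simp
  next
    case Some_b: (Some b)
    have "pad E a = pad E b"
      using act_pad[OF assms(1,2) Some] act_pad[OF assms(1,2) Some_b] assms(4) by simp
    then have "a = b"
      using pad_inj act_stack_count[OF assms(1) Some] act_stack_count[OF assms(1) Some_b] assms(2)
      by simp
    then show ?thesis using Some Some_b by simp
  qed
qed

section \<open>A common padding of two legal states\<close>

lemma fresh_list: "finite (A :: nat set) \<Longrightarrow> \<exists>xs. length xs = n \<and> distinct xs \<and> set xs \<inter> A = {}"
proof -
  assume "finite A"
  then have "\<forall>a\<in>A. a < Suc (Max (insert 0 A))" by (simp add: le_imp_less_Suc)
  then show ?thesis by (intro exI[of _ "[Suc (Max (insert 0 A))..<Suc (Max (insert 0 A)) + n]"]) auto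
qed

lemma fresh_lists:
  "finite (A :: nat set) \<Longrightarrow>
   \<exists>xss. map length xss = ns \<and> distinct (concat xss) \<and> set (concat xss) \<inter> A = {}"
proof (induction ns arbitrary: A)
  case (Cons n ns)
  obtain xs where xs: "length xs = n" "distinct xs" "set xs \<inter> A = {}"
    using fresh_list[OF Cons.prems] by blast
  obtain xss where "map length xss = ns" "distinct (concat xss)" "set (concat xss) \<inter> (A \<union> set xs) = {}"
    using Cons.IH[of "A \<union> set xs"] Cons.prems by blast
  then show ?case using xs by (intro exI[of _ "xs # xss"]) auto
qed simp

lemma fresh_config:
  assumes "finite A" "length ns = k + 2"
  shows "\<exists>E. length (fst (snd E)) = k \<and> map length (containers E) = ns \<and>
    distinct (concat (containers E)) \<and> labels E \<inter> A = {}"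
proof -
  obtain xss where xss: "map length xss = ns" "distinct (concat xss)" "set (concat xss) \<inter> A = {}"
    using fresh_lists[OF assms(1)] by blast
  then have len: "length xss = k + 2" using assms(2) by auto
  then obtain a rest where rest: "xss = a # rest" by (cases xss) auto
  with len have "rest \<noteq> []" by auto
  then obtain ms b where "rest = ms @ [b]" by (cases rest rule: rev_cases) auto
  with rest len have "xss = a # ms @ [b]" "length ms = k" by auto
  then show ?thesis using xss by (intro exI[of _ "(a, ms, b)"]) auto
qed

lemma relabel_list: "distinct xs \<Longrightarrow> length xs = length ys \<Longrightarrow> \<exists>g. map g xs = (ys :: nat list)"
proof (induction xs arbitrary: ys)
  case (Cons x xs)
  then obtain y ys' where ys: "ys = y # ys'" by (cases ys) auto
  obtain g where "map g xs = ys'" using Cons ys by auto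
  then have "map (g(x := y)) (x # xs) = ys" using Cons.prems ys by (simp add: map_fun_upd)
  then show ?case by blast
qed simp

lemma map_map_eq_if_concat_eq:
  "map length xss = map length yss \<Longrightarrow> concat (map (map g) xss) = concat yss \<Longrightarrow>
   map (map g) xss = yss"
proof (induction xss arbitrary: yss)
  case (Cons xs xss)
  then obtain ys yss' where yss: "yss = ys # yss'" by (cases yss) auto
  have "map g xs @ concat (map (map g) xss) = ys @ concat yss'" "length (map g xs) = length ys"
    using Cons.prems yss by simp_all
  then have "map g xs = ys" "concat (map (map g) xss) = concat yss'" by auto
  then show ?case using Cons yss by simp
qed simp

lemma relabel_lists:
  assumes "distinct (concat xss)" "map length xss = map length yss"
  shows "\<exists>g. map (map g) xss = (yss :: nat list list)"
proof -
  have "length (concat xss) = length (concat yss)" using assms(2) by (simp add: length_concat)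
  then obtain g where "map g (concat xss) = concat yss" using relabel_list[OF assms(1)] by blast
  then show ?thesis using map_map_eq_if_concat_eq[OF assms(2)] by (auto simp: map_concat)
qed

lemma relabel_config:
  assumes "distinct (concat (containers c))" "map length (containers c) = map length (containers d)"
  shows "\<exists>g. d = relabel g c"
proof -
  obtain g where "map (map g) (containers c) = containers d" using relabel_lists[OF assms] by blast
  then have "containers (relabel g c) = containers d" by (simp add: containers_relabel)
  then show ?thesis using containers_inj by metis
qed

text \<open>Padding lengths that fill two shapes up to their componentwise maximum.\<close>
lemma fill_to_max:
  fixes a b :: "nat list"
  assumes "length a = length b"
  shows "map2 (+) a (map2 (-) (map2 max a b) a) = map2 max a b"
    and "map2 (+) b (map2 (-) (map2 max a b) b) = map2 max a b"
  using assms by (induction a b rule: list_induct2) auto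

lemma common_padding:
  assumes "Some s \<in> states k" "Some t \<in> states k"
  shows "\<exists>E F g. length (fst (snd E)) = k \<and> length (fst (snd F)) = k \<and>
    labels F \<inter> labels t = {} \<and> pad F t = relabel g (pad E s)"
proof -
  let ?ns = "map length (containers s)"
  let ?nt = "map length (containers t)"
  let ?L = "map2 max ?ns ?nt"
  have s: "length (fst (snd s)) = k" "distinct (concat (containers s))"
    and t: "length (fst (snd t)) = k" "distinct (concat (containers t))"
    using assms by (simp_all add: Some_in_states)
  then have lengths: "length ?ns = k + 2" "length ?nt = k + 2"
    by (simp_all add: length_containers)
  obtain E where E: "length (fst (snd E)) = k" "map length (containers E) = map2 (-) ?L ?ns"
    "distinct (concat (containers E))" "labels E \<inter> labels s = {}"
    using fresh_config[of "labels s" "map2 (-) ?L ?ns" k] lengths by auto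
  obtain F where F: "length (fst (snd F)) = k" "map length (containers F) = map2 (-) ?L ?nt"
    "labels F \<inter> labels t = {}"
    using fresh_config[of "labels t" "map2 (-) ?L ?nt" k] lengths by auto
  have "map length (containers (pad E s)) = ?L"
    using pad_shape[of E s] E(1,2) s(1) fill_to_max(1)[of ?ns ?nt] lengths by simp
  moreover have "map length (containers (pad F t)) = ?L"
    using pad_shape[of F t] F(1,2) t(1) fill_to_max(2)[of ?ns ?nt] lengths by simp
  moreover have "distinct (concat (containers (pad E s)))"
    using pad_distinct[of E s] E s by simp
  ultimately obtain g where "pad F t = relabel g (pad E s)"
    using relabel_config[of "pad E s" "pad F t"] by auto
  then show ?thesis using E(1) F(1,3) by blast
qed

lemma agreement_spreads:
  assumes "Some s \<in> states k" "Some t \<in> states k"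
    "act k u (Some s) = Some r" "act k v (Some s) = Some r"
  shows "act k u (Some t) = act k v (Some t)"
proof -
  obtain E F g where E: "length (fst (snd E)) = k" and F: "length (fst (snd F)) = k"
    and fresh: "labels F \<inter> labels t = {}" and relabelled: "pad F t = relabel g (pad E s)"
    using common_padding[OF assms(1,2)] by blast
  have s: "length (fst (snd s)) = k" and t: "length (fst (snd t)) = k"
    using assms(1,2) by (simp_all add: Some_in_states)
  then have padded: "length (fst (snd (pad E s))) = k" using E by (cases E; cases s) simp
  have "act k u (Some (pad E s)) = act k v (Some (pad E s))"
    using act_pad[OF s E assms(3)] act_pad[OF s E assms(4)] by simp
  then have "act k u (Some (pad F t)) = act k v (Some (pad F t))"
    unfolding relabelled act_relabel[OF padded] by simp
  then show ?thesis using unpad_agreement[OF t F fresh] by blast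
qed

lemma act_defined_if_roomy:
  assumes "length (fst (snd c)) = k" "set w \<subseteq> {1..k+1}"
    "\<forall>j\<le>k. length w \<le> length (containers c ! j)"
  shows "act k w (Some c) \<noteq> None"
  using assms
proof (induction w arbitrary: c)
  case (Cons i w)
  obtain inp ss out where c: "c = (inp, ss, out)" by (cases c)
  have range: "1 \<le> i" "i \<le> k + 1" using Cons.prems(2) by auto
  then have "Suc (length w) \<le> length (containers c ! (i - 1))"
    using Cons.prems(3)[rule_format, of "i - 1"] by simp
  then have "move k i (Some c) \<noteq> None"
    using move_fails_iff[of ss k i inp out] Cons.prems(1) range unfolding c by auto
  then obtain c' where c': "move k i (Some c) = Some c'" by blast
  have "\<forall>j\<le>k. length w \<le> length (containers c' ! j)"
  proof (intro allI impI)
    fix j assume "j \<le> k"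
    then show "length w \<le> length (containers c' ! j)"
      using Cons.prems(3)[rule_format, of j] move_container_length[OF Cons.prems(1) c', of j] by simp
  qed
  moreover have "set w \<subseteq> {1..k+1}" using Cons.prems(2) by simp
  ultimately show ?case
    using Cons.IH[OF move_stack_count[OF Cons.prems(1) c']] c' by simp
qed simp

text \<open>Every word acts legally on some state, for instance on one with \<open>|w|\<close> fresh elements in
  each container.\<close>
lemma roomy_state_exists:
  assumes "w \<in> words k"
  shows "\<exists>s \<in> states k. act k w s \<noteq> None"
proof -
  obtain E where E: "length (fst (snd E)) = k" "map length (containers E) = replicate (k + 2) (length w)"
    "distinct (concat (containers E))"
    using fresh_config[of "{}" "replicate (k + 2) (length w)" k] by auto
  have "length (containers E ! j) = length w" if "j \<le> k" for j
  proof -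
    have "length (containers E ! j) = map length (containers E) ! j"
      using that by (simp add: length_containers E(1))
    also have "\<dots> = length w" unfolding E(2) by (rule nth_replicate) (use that in simp)
    finally show ?thesis .
  qed
  then have "act k w (Some E) \<noteq> None"
    using act_defined_if_roomy[OF E(1)] assms by (simp add: words_def)
  moreover have "Some E \<in> states k" using E by (simp add: Some_in_states)
  ultimately show ?thesis by blast
qed

theorem proposition4:
  fixes k :: nat and u v :: "nat list"
  assumes "u \<in> words k" and "v \<in> words k"
  shows "(\<exists>s \<in> states k. act k u s = act k v s \<and> act k u s \<noteq> None) \<longleftrightarrow> equiv_words k u v"
proof
  assume "\<exists>s \<in> states k. act k u s = act k v s \<and> act k u s \<noteq> None"
  then obtain s r where s: "Some s \<in> states k" "act k u (Some s) = Some r" "act k v (Some s) = Some r"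
    by (metis act_None not_None_eq)
  show "equiv_words k u v"
    unfolding equiv_words_def
  proof
    fix t assume "t \<in> states k"
    then show "act k u t = act k v t"
      using agreement_spreads[OF s(1) _ s(2,3)] by (cases t) auto
  qed
next
  assume "equiv_words k u v"
  then show "\<exists>s \<in> states k. act k u s = act k v s \<and> act k u s \<noteq> None"
    using roomy_state_exists[OF assms(1)] unfolding equiv_words_def by blast
qed

end
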